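(* Consider the system $\dot\theta_i=\omega_i-\frac{\kappa}{N}\sum_{j=1}^N(1+\cos\theta_j)\sin\theta_i$, $i=1,\dots,N$. For an equilibrium $\Theta$ let $R=\frac1N\sum_j(1+\cos\theta_j)$. (a) If $\kappa>0$, then any equilibrium whose order parameter $R$ satisfies $NR(1-R)+\frac{\sum_i\omega_i^2}{N\kappa^2R^2}>0$ is linearly unstable; in particular any equilibrium with $0<R<1$ is linearly unstable. (b) If $\kappa<0$, then any equilibrium whose order parameter satisfies $NR(1-R)+\frac{\sum_i\omega_i^2}{N\kappa^2R^2}<0$ is linearly unstable.
   Context: An equilibrium is a point where all right-hand sides vanish; it is linearly unstable if the Jacobian matrix of the vector field at that point has an eigenvalue with positive real part. The conditions implicitly require $R\neq0$. *)

theory Defs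
  imports "HOL-Analysis.Analysis"
begin

definition vfield :: "real \<Rightarrow> real^'n \<Rightarrow> real^'n \<Rightarrow> real^'n" where
  "vfield \<kappa> \<omega> \<theta> = (\<chi> i. \<omega> $ i - (\<kappa> / real CARD('n)) *
      (\<Sum>j\<in>UNIV. 1 + cos (\<theta> $ j)) * sin (\<theta> $ i))"

definition order_param :: "real^'n \<Rightarrow> real" where
  "order_param \<theta> = (\<Sum>j\<in>UNIV. 1 + cos (\<theta> $ j)) / real CARD('n)"

definition is_equilibrium :: "(real^'n \<Rightarrow> real^'n) \<Rightarrow> real^'n \<Rightarrow> bool" where
  "is_equilibrium F x \<longleftrightarrow> F x = 0"

definition linearly_unstable :: "(real^'n \<Rightarrow> real^'n) \<Rightarrow> real^'n \<Rightarrow> bool" where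
  "linearly_unstable F x \<longleftrightarrow>
     (\<exists>(\<mu>::complex) (v::complex^'n). v \<noteq> 0 \<and> 0 < Re \<mu> \<and>
        (\<chi> i k. complex_of_real (jacobian F (at x) $ i $ k)) *v v = \<mu> *s v)"

end

theory Submission
  imports Defs
begin

(* At an equilibrium the Jacobian is J = (kappa/N) s s^T - kappa R diag(cos theta_i) with
   s = (sin theta_i), a symmetric matrix. Since omega_i = kappa R sin theta_i there, its trace is
   kappa (N R (1 - R) + sum omega_i^2 / (N kappa^2 R^2)). A symmetric matrix with positive trace
   has a positive diagonal entry e_i^T J e_i, so the maximum of its Rayleigh quotient, which is
   an eigenvalue, is positive. *)

lemma linear_coeff_zero_if_quadratic_nonneg:
  fixes a b :: real
  assumes nonneg: "\<And>t. 0 \<le> a * t + b * t\<^sup>2"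
  shows "a = 0"
proof (rule ccontr)
  assume "a \<noteq> 0"
  define c where "c = \<bar>b\<bar> + 1"
  have "c > 0" "b - c < 0"
    unfolding c_def by auto
  have "a * (- a / c) + b * (- a / c)\<^sup>2 = a\<^sup>2 / c\<^sup>2 * (b - c)"
    using \<open>c > 0\<close> by (simp add: field_simps power2_eq_square)
  also have "\<dots> < 0"
    using \<open>a \<noteq> 0\<close> \<open>c > 0\<close> \<open>b - c < 0\<close> by (intro mult_pos_neg) simp_all
  finally show False
    using nonneg[of "- a / c"] by simp
qed

lemma symmetric_matrix_inner_commute:
  fixes A :: "real^'n^'n"
  assumes "transpose A = A"
  shows "x \<bullet> (A *v y) = (A *v x) \<bullet> y"
  by (metis assms dot_lmul_matrix vector_transpose_matrix)

lemma symmetric_matrix_eigenvector_if_rayleigh_max: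
  fixes A :: "real^'n^'n"
  assumes sym: "transpose A = A"
    and max: "\<And>x. x \<bullet> (A *v x) \<le> l * (x \<bullet> x)"
    and attained: "v \<bullet> (A *v v) = l * (v \<bullet> v)"
  shows "A *v v = l *\<^sub>R v"
proof -
  define w where "w = A *v v - l *\<^sub>R v"
  have "0 \<le> (- 2 * (w \<bullet> w)) * t + (l * (w \<bullet> w) - w \<bullet> (A *v w)) * t\<^sup>2" for t
  proof -
    have "(v + t *\<^sub>R w) \<bullet> (A *v (v + t *\<^sub>R w))
        = v \<bullet> (A *v v) + 2 * t * (w \<bullet> (A *v v)) + t\<^sup>2 * (w \<bullet> (A *v w))"
      using symmetric_matrix_inner_commute[OF sym, of v w]
      by (simp add: matrix_vector_right_distrib matrix_vector_mult_scaleR inner_add_left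
          inner_add_right inner_commute power2_eq_square algebra_simps)
    moreover have "(v + t *\<^sub>R w) \<bullet> (v + t *\<^sub>R w) = v \<bullet> v + 2 * t * (w \<bullet> v) + t\<^sup>2 * (w \<bullet> w)"
      by (simp add: inner_add_left inner_add_right inner_commute power2_eq_square algebra_simps)
    moreover have "w \<bullet> (A *v v) - l * (w \<bullet> v) = w \<bullet> w"
      by (simp add: w_def inner_diff_right)
    ultimately show ?thesis
      using max[of "v + t *\<^sub>R w"] attained by (simp add: algebra_simps)
  qed
  then have "- 2 * (w \<bullet> w) = 0"
    by (rule linear_coeff_zero_if_quadratic_nonneg)
  then show ?thesis
    by (simp add: w_def)
qed

lemma symmetric_matrix_top_eigenvector:
  fixes A :: "real^'n^'n"
  assumes sym: "transpose A = A"
  obtains v l where "v \<noteq> 0" "A *v v = l *\<^sub>R v" "\<And>x. x \<bullet> (A *v x) \<le> l * (x \<bullet> x)"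
proof -
  define q where "q x = x \<bullet> (A *v x)" for x
  have "continuous_on (sphere 0 1) q"
    unfolding q_def by (intro continuous_intros linear_continuous_on matrix_vector_mul_linear)
  then obtain v where v: "v \<in> sphere 0 1" and v_max: "\<And>x. x \<in> sphere 0 1 \<Longrightarrow> q x \<le> q v"
    using continuous_attains_sup[of "sphere 0 1" q] by auto
  have q_scale: "q (c *\<^sub>R x) = c\<^sup>2 * q x" for c x
    unfolding q_def by (simp add: matrix_vector_mult_scaleR power2_eq_square)
  have bound: "q x \<le> q v * (x \<bullet> x)" for x
  proof (cases "x = 0")
    case False
    then have "q ((1 / norm x) *\<^sub>R x) \<le> q v"
      by (intro v_max) simp
    then show ?thesis
      using False by (simp add: q_scale power_divide divide_le_eq dot_square_norm)
  qed (simp add: q_def)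
  have "v \<bullet> v = 1"
    using v by (simp add: dot_square_norm)
  then have "A *v v = q v *\<^sub>R v"
    using bound by (intro symmetric_matrix_eigenvector_if_rayleigh_max[OF sym]) (simp_all add: q_def)
  moreover have "v \<noteq> 0"
    using v by auto
  ultimately show ?thesis
    using that bound unfolding q_def by blast
qed

lemma symmetric_matrix_pos_eigenvalue_if_trace_pos:
  fixes A :: "real^'n^'n"
  assumes sym: "transpose A = A" and trace: "0 < trace A"
  obtains v l where "v \<noteq> 0" "0 < l" "A *v v = l *\<^sub>R v"
proof -
  have "\<not> (\<forall>i. A $ i $ i \<le> 0)"
    using trace sum_nonpos[of UNIV "\<lambda>i. A $ i $ i"] by (auto simp: trace_def)
  then obtain i where "0 < A $ i $ i"
    by (auto simp: not_le)
  obtain v l where eigen: "v \<noteq> 0" "A *v v = l *\<^sub>R v"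
    and max: "\<And>x. x \<bullet> (A *v x) \<le> l * (x \<bullet> x)"
    using symmetric_matrix_top_eigenvector[OF sym] by blast
  have "A $ i $ i = axis i 1 \<bullet> (A *v axis i 1)"
    by (simp add: inner_axis' matrix_vector_mult_basis column_def)
  also have "\<dots> \<le> l"
    using max[of "axis i 1"] by (simp add: inner_axis_axis)
  finally have "0 < l"
    using \<open>0 < A $ i $ i\<close> by simp
  with eigen show ?thesis
    by (intro that)
qed

lemma matrix_vector_mult_of_real:
  fixes A :: "real^'m^'n"
  shows "(\<chi> i k. complex_of_real (A $ i $ k)) *v (\<chi> i. complex_of_real (v $ i))
    = (\<chi> i. complex_of_real ((A *v v) $ i))"
  by (simp add: vec_eq_iff matrix_vector_mult_def)

lemma linearly_unstable_if_pos_eigenvalue: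
  assumes "jacobian F (at x) *v v = l *\<^sub>R v" "v \<noteq> 0" "0 < l"
  shows "linearly_unstable F x"
proof -
  define cv where "cv = (\<chi> i. complex_of_real (v $ i))"
  have "(\<chi> i k. complex_of_real (jacobian F (at x) $ i $ k)) *v cv = complex_of_real l *s cv"
    unfolding cv_def matrix_vector_mult_of_real assms(1) by (simp add: vec_eq_iff)
  moreover have "cv \<noteq> 0"
    using assms(2) by (simp add: cv_def vec_eq_iff)
  ultimately show ?thesis
    unfolding linearly_unstable_def using assms(3) by force
qed

lemma linearly_unstable_if_symmetric_jacobian_trace_pos:
  assumes "transpose (jacobian F (at x)) = jacobian F (at x)" "0 < trace (jacobian F (at x))"
  shows "linearly_unstable F x"
proof -
  obtain v l where "v \<noteq> 0" "0 < l" "jacobian F (at x) *v v = l *\<^sub>R v"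
    using symmetric_matrix_pos_eigenvalue_if_trace_pos[OF assms] .
  then show ?thesis
    by (intro linearly_unstable_if_pos_eigenvalue)
qed

lemma has_derivative_componentwise_cart:
  fixes f :: "'a::real_normed_vector \<Rightarrow> real^'n"
  shows "(f has_derivative f') (at a within S) \<longleftrightarrow>
    (\<forall>i. ((\<lambda>x. f x $ i) has_derivative (\<lambda>h. f' h $ i)) (at a within S))"
proof -
  have "(\<forall>b\<in>Basis. P b) \<longleftrightarrow> (\<forall>i. P (axis i 1))" for P :: "real^'n \<Rightarrow> bool"
    by (auto simp: Basis_vec_def)
  then show ?thesis
    by (subst has_derivative_componentwise_within) (simp add: inner_axis)
qed

lemma has_derivative_vec_nth [derivative_intros]:
  "(f has_derivative f') F \<Longrightarrow> ((\<lambda>x. f x $ i) has_derivative (\<lambda>h. f' h $ i)) F"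
  by (rule bounded_linear.has_derivative[OF bounded_linear_vec_nth])

lemma jacobian_at_eqI:
  fixes f :: "real^'m \<Rightarrow> real^'n"
  assumes "(f has_derivative (\<lambda>h. A *v h)) (at x)"
  shows "jacobian f (at x) = A"
  using frechet_derivative_at[OF assms] by (metis jacobian_def matrix_of_matrix_vector_mul)

definition vfield_jacobian :: "real \<Rightarrow> real^'n \<Rightarrow> real^'n^'n" where
  "vfield_jacobian \<kappa> \<theta> = (\<chi> i k. \<kappa> / real CARD('n) * sin (\<theta> $ i) * sin (\<theta> $ k)
      - (if i = k then \<kappa> * order_param \<theta> * cos (\<theta> $ i) else 0))"

lemma vfield_nth: "vfield \<kappa> \<omega> \<theta> $ i = \<omega> $ i - \<kappa> * order_param \<theta> * sin (\<theta> $ i)"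
  by (simp add: vfield_def order_param_def)

lemma has_derivative_order_param:
  fixes \<theta> :: "real^'n"
  shows "(order_param has_derivative (\<lambda>h. - (\<Sum>j\<in>UNIV. sin (\<theta> $ j) * h $ j) / real CARD('n))) (at \<theta>)"
  unfolding order_param_def
  by (auto intro!: derivative_eq_intros simp: sum_negf ac_simps)

lemma vfield_jacobian_mult_nth:
  fixes \<theta> h :: "real^'n"
  shows "(vfield_jacobian \<kappa> \<theta> *v h) $ i
      = \<kappa> / real CARD('n) * sin (\<theta> $ i) * (\<Sum>k\<in>UNIV. sin (\<theta> $ k) * h $ k)
        - \<kappa> * order_param \<theta> * cos (\<theta> $ i) * h $ i"
  by (simp add: vfield_jacobian_def matrix_vector_mult_def left_diff_distrib sum_subtractf
      sum_distrib_left mult.assoc if_distrib[of "\<lambda>x. x * h $ _"] cong: if_cong)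

lemma has_derivative_vfield:
  fixes \<theta> :: "real^'n"
  shows "(vfield \<kappa> \<omega> has_derivative (\<lambda>h. vfield_jacobian \<kappa> \<theta> *v h)) (at \<theta>)"
  unfolding has_derivative_componentwise_cart vfield_nth vfield_jacobian_mult_nth
  by (auto intro!: derivative_eq_intros has_derivative_order_param simp: algebra_simps)

lemma jacobian_vfield: "jacobian (vfield \<kappa> \<omega>) (at \<theta>) = vfield_jacobian \<kappa> \<theta>"
  by (rule jacobian_at_eqI[OF has_derivative_vfield])

lemma transpose_vfield_jacobian: "transpose (vfield_jacobian \<kappa> \<theta>) = vfield_jacobian \<kappa> \<theta>"
  by (simp add: vec_eq_iff transpose_def vfield_jacobian_def)

lemma trace_vfield_jacobian:
  fixes \<theta> :: "real^'n"
  shows "trace (vfield_jacobian \<kappa> \<theta>)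
    = \<kappa> / real CARD('n) * (\<Sum>i\<in>UNIV. (sin (\<theta> $ i))\<^sup>2) - \<kappa> * order_param \<theta> * (\<Sum>i\<in>UNIV. cos (\<theta> $ i))"
  by (simp add: trace_def vfield_jacobian_def sum_subtractf sum_distrib_left power2_eq_square
      mult.assoc)

lemma sum_cos_eq_order_param:
  fixes \<theta> :: "real^'n"
  shows "(\<Sum>i\<in>UNIV. cos (\<theta> $ i)) = real CARD('n) * (order_param \<theta> - 1)"
  by (simp add: order_param_def sum.distrib field_simps)

lemma equilibrium_vfield_nth:
  assumes "is_equilibrium (vfield \<kappa> \<omega>) \<theta>"
  shows "\<omega> $ i = \<kappa> * order_param \<theta> * sin (\<theta> $ i)"
  using arg_cong[OF assms[unfolded is_equilibrium_def], of "\<lambda>x. x $ i"] by (simp add: vfield_nth)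

lemma trace_jacobian_vfield_equilibrium:
  fixes \<omega> \<theta> :: "real^'n"
  defines "R \<equiv> order_param \<theta>" and "N \<equiv> real CARD('n)"
  assumes eq: "is_equilibrium (vfield \<kappa> \<omega>) \<theta>" and "\<kappa> \<noteq> 0" and "R \<noteq> 0"
  shows "trace (jacobian (vfield \<kappa> \<omega>) (at \<theta>))
    = \<kappa> * (N * R * (1 - R) + (\<Sum>i\<in>UNIV. (\<omega> $ i)\<^sup>2) / (N * \<kappa>\<^sup>2 * R\<^sup>2))"
proof -
  have "(\<Sum>i\<in>UNIV. (\<omega> $ i)\<^sup>2) = \<kappa>\<^sup>2 * R\<^sup>2 * (\<Sum>i\<in>UNIV. (sin (\<theta> $ i))\<^sup>2)"
    using equilibrium_vfield_nth[OF eq] by (simp add: R_def power_mult_distrib sum_distrib_left)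
  then show ?thesis
    unfolding jacobian_vfield trace_vfield_jacobian sum_cos_eq_order_param
    using assms by (simp add: field_simps power2_eq_square)
qed

lemma linearly_unstable_vfield_equilibrium:
  fixes \<omega> \<theta> :: "real^'n"
  defines "R \<equiv> order_param \<theta>" and "N \<equiv> real CARD('n)"
  assumes eq: "is_equilibrium (vfield \<kappa> \<omega>) \<theta>"
    and pos: "0 < \<kappa> * (N * R * (1 - R) + (\<Sum>i\<in>UNIV. (\<omega> $ i)\<^sup>2) / (N * \<kappa>\<^sup>2 * R\<^sup>2))"
  shows "linearly_unstable (vfield \<kappa> \<omega>) \<theta>"
proof -
  \<comment> \<open>for \<open>R = 0\<close> the bracket vanishes, division by zero giving 0\<close>
  have "\<kappa> \<noteq> 0" "R \<noteq> 0"
    using pos by auto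
  then have "0 < trace (jacobian (vfield \<kappa> \<omega>) (at \<theta>))"
    using trace_jacobian_vfield_equilibrium[OF eq] pos by (simp add: R_def N_def)
  then show ?thesis
    by (intro linearly_unstable_if_symmetric_jacobian_trace_pos)
      (simp_all add: jacobian_vfield transpose_vfield_jacobian)
qed

theorem proposition5p5:
  fixes \<kappa> :: real and \<omega> \<Theta> :: "real^'n"
  assumes eq: "is_equilibrium (vfield \<kappa> \<omega>) \<Theta>"
  defines "R \<equiv> order_param \<Theta>"
  defines "N \<equiv> real CARD('n)"
  shows "(\<kappa> > 0 \<longrightarrow>
            ((N * R * (1 - R) + (\<Sum>i\<in>UNIV. (\<omega> $ i)\<^sup>2) / (N * \<kappa>\<^sup>2 * R\<^sup>2) > 0
                \<longrightarrow> linearly_unstable (vfield \<kappa> \<omega>) \<Theta>)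
             \<and> (0 < R \<and> R < 1 \<longrightarrow> linearly_unstable (vfield \<kappa> \<omega>) \<Theta>)))
       \<and> (\<kappa> < 0 \<longrightarrow>
            (N * R * (1 - R) + (\<Sum>i\<in>UNIV. (\<omega> $ i)\<^sup>2) / (N * \<kappa>\<^sup>2 * R\<^sup>2) < 0
                \<longrightarrow> linearly_unstable (vfield \<kappa> \<omega>) \<Theta>))"
proof -
  define E where "E = N * R * (1 - R) + (\<Sum>i\<in>UNIV. (\<omega> $ i)\<^sup>2) / (N * \<kappa>\<^sup>2 * R\<^sup>2)"
  have unstable: "linearly_unstable (vfield \<kappa> \<omega>) \<Theta>" if "0 < \<kappa> * E"
    using linearly_unstable_vfield_equilibrium[OF eq] that by (simp add: E_def R_def N_def)
  have "0 < E" if "0 < R" "R < 1"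
  proof -
    have "0 < N * R * (1 - R)"
      using that by (simp add: N_def)
    moreover have "0 \<le> (\<Sum>i\<in>UNIV. (\<omega> $ i)\<^sup>2) / (N * \<kappa>\<^sup>2 * R\<^sup>2)"
      by (simp add: N_def sum_nonneg)
    ultimately show ?thesis
      unfolding E_def by linarith
  qed
  then show ?thesis
    unfolding E_def[symmetric] using unstable by (auto simp: mult_neg_neg)
qed

end
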